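(* Neither $\sim_{hpb}\subseteq\sim_{\mathrm{t}\mu}$ nor $\sim_{\mathrm{t}\mu}\subseteq\sim_{hpb}$: there exist systems $\mathfrak T_1,\mathfrak T_2$ with $\mathfrak T_1\sim_{hpb}\mathfrak T_2$ but $\mathfrak T_1\not\sim_{\mathrm{t}\mu}\mathfrak T_2$, and there exist systems $\mathfrak T_3,\mathfrak T_4$ with $\mathfrak T_3\sim_{\mathrm{t}\mu}\mathfrak T_4$ but $\mathfrak T_3\not\sim_{hpb}\mathfrak T_4$.
   Context: A system (TSI) is $\mathfrak T=(S,s_0,T,I,\Sigma)$ with states $S$, initial $s_0$, labels $\Sigma$, transitions $T\subseteq S\times\Sigma\times S$, irreflexive symmetric independence $I\subseteq T\times T$ satisfying: with $(s,a,s_1)\prec(s_2,a,q)$ iff $\exists b$: $(s,a,s_1)I(s,b,s_2)$, $(s,a,s_1)I(s_1,b,q)$, $(s,b,s_2)I(s_2,a,q)$ and $\sim$ its equivalence closure, (A1) $(s,a,s_1)\sim(s,a,s_2)\Rightarrow s_1=s_2$; (A2) $(s,a,s_1)I(s,b,s_2)\Rightarrow\exists q.\,(s,a,s_1)I(s_1,b,q)\wedge(s,b,s_2)I(s_2,a,q)$; (A3) $(s,a,s_1)I(s_1,b,q)\Rightarrow\exists s_2.\,(s,a,s_1)I(s,b,s_2)\wedge(s,b,s_2)I(s_2,a,q)$; (A4) $t\sim t'\Rightarrow\{u:tIu\}=\{u:t'Iu\}$; systems are image-finite. For $t=(s,a,s')$: $\sigma(t)=s,\tau(t)=s',\delta(t)=a$.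 Relations: $t\otimes t'$ iff $\sigma(t)=\sigma(t')\wedge tIt'$; $t\ominus t'$ iff $\tau(t)=\sigma(t')\wedge tIt'$; $t\le t'$ iff $\tau(t)=\sigma(t')\wedge\neg tIt'$. Processes: $\mathfrak X(s)$ = transitions with source $s$; conflict-free set = set of transitions with common source, pairwise $\otimes$; support sets = the $\mathfrak X(s)$ and non-empty conflict-free sets; $M\sqsubseteq R$ iff $M\subseteq R$ and no $t\in R\setminus M$ has $t\otimes t'$ for all $t'\in M$; $\mathcal X$ = all $\mathfrak X(s)$ and all support sets $M\sqsubseteq\mathfrak X(s)$; $\mathfrak A=T\cup\{t_\epsilon\}$ with fresh $t_\epsilon$, $\tau(t_\epsilon)=s_0$, $t_\epsilon\le t$ whenever $\sigma(t)=s_0$, never $t_\epsilon\ominus t$; $\mathfrak S=\mathcal X\times\mathfrak A$, initial process $(\mathfrak X(s_0),t_\epsilon)$. Trace modal mu-calculus equivalence $\sim_{\mathrm{t}\mu}$: systems are equivalent iff their initial processes satisfy the same closed fixpoint-free formulas $\phi::=\mathrm{tt}\mid\neg\phi\mid\phi\wedge\phi\mid\langle a\rangle\phi\mid\langle\otimes\rangle\phi$ with $[\![\langle a\rangle\phi]\!]=\{(R,t):\exists r\in R.\ \delta(r)=a,\ (t\le r\text{ or }t\ominus r),\ (\mathfrak X(\tau(r)),r)\in[\![\phi]\!]\}$, $[\![\langle\otimes\rangle\phi]\!]=\{(R,t):\exists M\in\mathcal X.\ M\sqsubseteq R,\ (M,t)\in[\![\phi]\!]\}$, and boolean connectives interpreted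 as usual in $\mathfrak S$. $\sim_{hpb}$: runs are finite sequences $[t_1,\dots,t_k]$ with $\sigma(t_1)=s_0$, $\sigma(t_{i+1})=\tau(t_i)$; $\varrho(\pi)$ is the last transition (empty run $\epsilon$ ends at $s_0$; its "last transition" is independent of nothing). The labelled poset of a run: elements $1..k$ labelled $\delta(t_i)$, order the reflexive-transitive closure of $\{(i,j):i<j,\neg t_iIt_j\}$. $(\pi_1.u,\pi_2.v)$ is synchronous iff $(\varrho(\pi_1),u)\in I_1\Leftrightarrow(\varrho(\pi_2),v)\in I_2$ and the labelled posets of $\pi_1.u,\pi_2.v$ are isomorphic. hpb game from $(\epsilon,\epsilon)$: Adam picks a system and a transition $u$ from the end state of the current run there; Eve answers with an equally labelled transition $v$ from the end state of the current run in the other system so that the extended pair is synchronous; a player unable to move loses; infinite plays are won by Eve. $\mathfrak T_1\sim_{hpb}\mathfrak T_2$ iff Eve has a winning strategy. *)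

theory Defs
  imports Main
begin

section \<open>Transition systems with independence (TSI)\<close>

type_synonym ('s, 'l) trans = "'s \<times> 'l \<times> 's"

record ('s, 'l) tsi =
  St   :: "'s set"
  init :: 's
  Lab  :: "'l set"
  Tr   :: "('s, 'l) trans set"
  Ind  :: "(('s, 'l) trans \<times> ('s, 'l) trans) set"

definition src :: "('s, 'l) trans \<Rightarrow> 's" where "src t = fst t"
definition tgt :: "('s, 'l) trans \<Rightarrow> 's" where "tgt t = snd (snd t)"
definition lab :: "('s, 'l) trans \<Rightarrow> 'l" where "lab t = fst (snd t)"

definition prec :: "('s, 'l, 'x) tsi_scheme \<Rightarrow> ('s, 'l) trans \<Rightarrow> ('s, 'l) trans \<Rightarrow> bool" where
  "prec T t u \<longleftrightarrow> (\<exists>s a s1 s2 q b. t = (s, a, s1) \<and> u = (s2, a, q) \<and>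
      (t, (s, b, s2)) \<in> Ind T \<and> (t, (s1, b, q)) \<in> Ind T \<and> ((s, b, s2), (s2, a, q)) \<in> Ind T)"

definition simT :: "('s, 'l, 'x) tsi_scheme \<Rightarrow> (('s, 'l) trans \<times> ('s, 'l) trans) set" where
  "simT T = ({(t, u). prec T t u} \<union> {(t, u). prec T u t})\<^sup>*"

definition is_tsi :: "('s, 'l, 'x) tsi_scheme \<Rightarrow> bool" where
  "is_tsi T \<longleftrightarrow>
     init T \<in> St T \<and>
     Tr T \<subseteq> St T \<times> Lab T \<times> St T \<and>
     Ind T \<subseteq> Tr T \<times> Tr T \<and>
     irrefl (Ind T) \<and> sym (Ind T) \<and>
     \<comment> \<open>(A1)\<close>
     (\<forall>s a s1 s2. ((s, a, s1), (s, a, s2)) \<in> simT T \<longrightarrow> s1 = s2) \<and>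
     \<comment> \<open>(A2)\<close>
     (\<forall>s a s1 b s2. ((s, a, s1), (s, b, s2)) \<in> Ind T \<longrightarrow>
        (\<exists>q. ((s, a, s1), (s1, b, q)) \<in> Ind T \<and> ((s, b, s2), (s2, a, q)) \<in> Ind T)) \<and>
     \<comment> \<open>(A3)\<close>
     (\<forall>s a s1 b q. ((s, a, s1), (s1, b, q)) \<in> Ind T \<longrightarrow>
        (\<exists>s2. ((s, a, s1), (s, b, s2)) \<in> Ind T \<and> ((s, b, s2), (s2, a, q)) \<in> Ind T)) \<and>
     \<comment> \<open>(A4)\<close>
     (\<forall>t t'. (t, t') \<in> simT T \<longrightarrow> {u. (t, u) \<in> Ind T} = {u. (t', u) \<in> Ind T}) \<and>
     \<comment> \<open>image-finiteness\<close>
     (\<forall>s. finite {t \<in> Tr T. src t = s})"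

definition Xs :: "('s, 'l, 'x) tsi_scheme \<Rightarrow> 's \<Rightarrow> ('s, 'l) trans set" where
  "Xs T s = {t \<in> Tr T. src t = s}"

definition otimes :: "('s, 'l, 'x) tsi_scheme \<Rightarrow> ('s, 'l) trans \<Rightarrow> ('s, 'l) trans \<Rightarrow> bool" where
  "otimes T t t' \<longleftrightarrow> src t = src t' \<and> (t, t') \<in> Ind T"

definition ominus :: "('s, 'l, 'x) tsi_scheme \<Rightarrow> ('s, 'l) trans \<Rightarrow> ('s, 'l) trans \<Rightarrow> bool" where
  "ominus T t t' \<longleftrightarrow> tgt t = src t' \<and> (t, t') \<in> Ind T"

definition leT :: "('s, 'l, 'x) tsi_scheme \<Rightarrow> ('s, 'l) trans \<Rightarrow> ('s, 'l) trans \<Rightarrow> bool" where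
  "leT T t t' \<longleftrightarrow> tgt t = src t' \<and> (t, t') \<notin> Ind T"

definition conflict_free :: "('s, 'l, 'x) tsi_scheme \<Rightarrow> ('s, 'l) trans set \<Rightarrow> bool" where
  "conflict_free T M \<longleftrightarrow> M \<subseteq> Tr T \<and> (\<exists>s. \<forall>t\<in>M. src t = s) \<and>
     (\<forall>t\<in>M. \<forall>t'\<in>M. t \<noteq> t' \<longrightarrow> otimes T t t')"

definition support :: "('s, 'l, 'x) tsi_scheme \<Rightarrow> ('s, 'l) trans set \<Rightarrow> bool" where
  "support T M \<longleftrightarrow> (\<exists>s\<in>St T. M = Xs T s) \<or> (M \<noteq> {} \<and> conflict_free T M)"

definition sqsub :: "('s, 'l, 'x) tsi_scheme \<Rightarrow> ('s, 'l) trans set \<Rightarrow> ('s, 'l) trans set \<Rightarrow> bool" where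
  "sqsub T M R \<longleftrightarrow> M \<subseteq> R \<and> \<not> (\<exists>t \<in> R - M. \<forall>t'\<in>M. otimes T t t')"

definition Xcal :: "('s, 'l, 'x) tsi_scheme \<Rightarrow> ('s, 'l) trans set set" where
  "Xcal T = {Xs T s | s. s \<in> St T} \<union> {M. support T M \<and> (\<exists>s\<in>St T. sqsub T M (Xs T s))}"

text \<open>Elements of \<open>\<A> = T \<union> {t_\<epsilon>}\<close>: \<open>None\<close> stands for the fresh \<open>t_\<epsilon>\<close>
  with \<open>\<tau>(t_\<epsilon>) = s\<^sub>0\<close>, \<open>t_\<epsilon> \<le> t\<close> iff \<open>\<sigma>(t) = s\<^sub>0\<close>, and never \<open>t_\<epsilon> \<ominus> t\<close>.\<close>
definition leA :: "('s, 'l, 'x) tsi_scheme \<Rightarrow> ('s, 'l) trans option \<Rightarrow> ('s, 'l) trans \<Rightarrow> bool" where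
  "leA T a r = (case a of None \<Rightarrow> src r = init T | Some t \<Rightarrow> leT T t r)"

definition ominusA :: "('s, 'l, 'x) tsi_scheme \<Rightarrow> ('s, 'l) trans option \<Rightarrow> ('s, 'l) trans \<Rightarrow> bool" where
  "ominusA T a r = (case a of None \<Rightarrow> False | Some t \<Rightarrow> ominus T t r)"

section \<open>Trace modal logic (fixpoint-free fragment)\<close>

datatype 'l form = TT | Neg "'l form" | Conj "'l form" "'l form" | Dia 'l "'l form" | DiaOt "'l form"

fun sat :: "('s, 'l, 'x) tsi_scheme \<Rightarrow> ('s, 'l) trans set \<Rightarrow> ('s, 'l) trans option \<Rightarrow> 'l form \<Rightarrow> bool" where
  "sat T R t TT = True"
| "sat T R t (Neg \<phi>) = (\<not> sat T R t \<phi>)"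
| "sat T R t (Conj \<phi> \<psi>) = (sat T R t \<phi> \<and> sat T R t \<psi>)"
| "sat T R t (Dia a \<phi>) = (\<exists>r\<in>R. lab r = a \<and> (leA T t r \<or> ominusA T t r) \<and>
                              sat T (Xs T (tgt r)) (Some r) \<phi>)"
| "sat T R t (DiaOt \<phi>) = (\<exists>M\<in>Xcal T. sqsub T M R \<and> sat T M t \<phi>)"

definition tmu_equiv :: "('s1, 'l, 'x) tsi_scheme \<Rightarrow> ('s2, 'l, 'y) tsi_scheme \<Rightarrow> bool" where
  "tmu_equiv T1 T2 \<longleftrightarrow>
     (\<forall>\<phi>. sat T1 (Xs T1 (init T1)) None \<phi> \<longleftrightarrow> sat T2 (Xs T2 (init T2)) None \<phi>)"

section \<open>History-preserving bisimulation game\<close>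

definition end_state :: "('s, 'l, 'x) tsi_scheme \<Rightarrow> ('s, 'l) trans list \<Rightarrow> 's" where
  "end_state T \<pi> = (if \<pi> = [] then init T else tgt (last \<pi>))"

text \<open>\<open>(\<rho>(\<pi>), u) \<in> I\<close>; the empty run's last transition is independent of nothing.\<close>
definition last_indep :: "('s, 'l, 'x) tsi_scheme \<Rightarrow> ('s, 'l) trans list \<Rightarrow> ('s, 'l) trans \<Rightarrow> bool" where
  "last_indep T \<pi> u \<longleftrightarrow> \<pi> \<noteq> [] \<and> (last \<pi>, u) \<in> Ind T"

text \<open>Order of the labelled poset of a run (positions indexed from 0).\<close>
definition run_ord :: "('s, 'l, 'x) tsi_scheme \<Rightarrow> ('s, 'l) trans list \<Rightarrow> (nat \<times> nat) set" where
  "run_ord T \<pi> = {(i, j). i < j \<and> j < length \<pi> \<and> (\<pi> ! i, \<pi> ! j) \<notin> Ind T}\<^sup>*"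

definition lposet_iso :: "('s1, 'l, 'x) tsi_scheme \<Rightarrow> ('s1, 'l) trans list \<Rightarrow>
                          ('s2, 'l, 'y) tsi_scheme \<Rightarrow> ('s2, 'l) trans list \<Rightarrow> bool" where
  "lposet_iso T1 \<pi>1 T2 \<pi>2 \<longleftrightarrow> length \<pi>1 = length \<pi>2 \<and>
     (\<exists>f. bij_betw f {..<length \<pi>1} {..<length \<pi>2} \<and>
          (\<forall>i < length \<pi>1. lab (\<pi>2 ! f i) = lab (\<pi>1 ! i)) \<and>
          (\<forall>i < length \<pi>1. \<forall>j < length \<pi>1. (i, j) \<in> run_ord T1 \<pi>1 \<longleftrightarrow> (f i, f j) \<in> run_ord T2 \<pi>2))"

definition synchronous :: "('s1, 'l, 'x) tsi_scheme \<Rightarrow> ('s2, 'l, 'y) tsi_scheme \<Rightarrow>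
    ('s1, 'l) trans list \<Rightarrow> ('s1, 'l) trans \<Rightarrow> ('s2, 'l) trans list \<Rightarrow> ('s2, 'l) trans \<Rightarrow> bool" where
  "synchronous T1 T2 \<pi>1 u \<pi>2 v \<longleftrightarrow>
     (last_indep T1 \<pi>1 u \<longleftrightarrow> last_indep T2 \<pi>2 v) \<and> lposet_iso T1 (\<pi>1 @ [u]) T2 (\<pi>2 @ [v])"

text \<open>Eve wins the hpb game from position \<open>(\<pi>1, \<pi>2)\<close>: a safety game (infinite plays are won
  by Eve), so the winning region is the greatest fixpoint: for every move of Adam in either
  system, Eve has an equally labelled synchronous answer leading to a winning position.\<close>
coinductive eve_wins :: "('s1, 'l, 'x) tsi_scheme \<Rightarrow> ('s2, 'l, 'y) tsi_scheme \<Rightarrow>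
    ('s1, 'l) trans list \<Rightarrow> ('s2, 'l) trans list \<Rightarrow> bool" for T1 T2 where
  "\<lbrakk> \<forall>u \<in> Tr T1. src u = end_state T1 \<pi>1 \<longrightarrow>
        (\<exists>v \<in> Tr T2. src v = end_state T2 \<pi>2 \<and> lab v = lab u \<and>
           synchronous T1 T2 \<pi>1 u \<pi>2 v \<and> eve_wins T1 T2 (\<pi>1 @ [u]) (\<pi>2 @ [v]));
     \<forall>v \<in> Tr T2. src v = end_state T2 \<pi>2 \<longrightarrow>
        (\<exists>u \<in> Tr T1. src u = end_state T1 \<pi>1 \<and> lab u = lab v \<and>
           synchronous T1 T2 \<pi>1 u \<pi>2 v \<and> eve_wins T1 T2 (\<pi>1 @ [u]) (\<pi>2 @ [v])) \<rbrakk>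
   \<Longrightarrow> eve_wins T1 T2 \<pi>1 \<pi>2"

definition hpb :: "('s1, 'l, 'x) tsi_scheme \<Rightarrow> ('s2, 'l, 'y) tsi_scheme \<Rightarrow> bool" where
  "hpb T1 T2 \<longleftrightarrow> eve_wins T1 T2 [] []"

end

theory Submission
  imports Defs "HOL-Library.Disjoint_Sets"
begin

(*
  The two equivalences observe independence in complementary places. The logic sees it only
  between transitions with a common source, through DiaOt and the conflict-free support sets:
  Dia a merely asks the next transition to start where the previous one ended. The hpb game
  sees it only between transitions of one run, that is between causally consecutive
  transitions, and never compares alternatives at a common source.

  T1 and T2 have the same transitions, two commuting squares of 0- and 1-moves out of the
  initial state, and differ only in how the four initial moves are paired into squares. Along
  runs their independence agrees, so Eve copies Adam's moves; but in T1 the 0-move enabling a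
  3-move and the 1-move enabling a 2-move are independent, which phi12 detects. T3 and T4 have
  the same conflicts everywhere, but the square spanned by their two initial moves closes in
  state 3, which offers a 2-move, in T3 and in the dead state 4 in T4; Adam plays the 0-move and
  then the independent 1-move in T3 and thereby forces Eve into state 4.
*)

section \<open>What the two equivalences observe of independence\<close>

lemma leA_or_ominusA_iff:
  "leA T t r \<or> ominusA T t r \<longleftrightarrow> src r = (case t of None \<Rightarrow> init T | Some t' \<Rightarrow> tgt t')"
  by (cases t) (auto simp: leA_def ominusA_def leT_def ominus_def)

lemma sat_cong_conflicts:
  assumes "Tr T' = Tr T" "St T' = St T" "init T' = init T"
    and "\<And>t u. src t = src u \<Longrightarrow> (t, u) \<in> Ind T' \<longleftrightarrow> (t, u) \<in> Ind T"
  shows "sat T' R t \<phi> \<longleftrightarrow> sat T R t \<phi>"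
proof -
  have "otimes T' = otimes T"
    using assms(4) by (auto simp: fun_eq_iff otimes_def)
  moreover have "Xs T' = Xs T"
    using assms(1) by (simp add: fun_eq_iff Xs_def)
  moreover have "sqsub T' = sqsub T"
    unfolding sqsub_def \<open>otimes T' = otimes T\<close> ..
  ultimately have "Xcal T' = Xcal T"
    using assms(1,2) by (simp add: Xcal_def support_def conflict_free_def)
  with \<open>sqsub T' = sqsub T\<close> \<open>Xs T' = Xs T\<close> show ?thesis
    by (induction \<phi> arbitrary: R t) (simp_all add: leA_or_ominusA_iff assms(3) split: option.split)
qed

lemma tmu_equiv_if_same_conflicts:
  assumes "Tr T' = Tr T" "St T' = St T" "init T' = init T"
    and "\<And>t u. src t = src u \<Longrightarrow> (t, u) \<in> Ind T' \<longleftrightarrow> (t, u) \<in> Ind T"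
  shows "tmu_equiv T T'"
  using sat_cong_conflicts[OF assms] assms(1,3) by (simp add: tmu_equiv_def Xs_def)

definition step_rel :: "('s, 'l, 'x) tsi_scheme \<Rightarrow> 's rel" where
  "step_rel T = {(src t, tgt t) | t. t \<in> Tr T}"

definition causally_follows :: "('s, 'l, 'x) tsi_scheme \<Rightarrow> ('s, 'l) trans \<Rightarrow> ('s, 'l) trans \<Rightarrow> bool" where
  "causally_follows T t u \<longleftrightarrow> (tgt t, src u) \<in> (step_rel T)\<^sup>*"

lemma causally_follows_nth:
  assumes "set \<pi> \<subseteq> Tr T" "successively (\<lambda>t u. tgt t = src u) \<pi>" "i < j" "j < length \<pi>"
  shows "causally_follows T (\<pi> ! i) (\<pi> ! j)"
proof -
  have "successively (causally_follows T) \<pi>"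
    using assms(2) by (rule successively_mono) (simp add: causally_follows_def)
  moreover have "causally_follows T t v"
    if "u \<in> Tr T" "causally_follows T t u" "causally_follows T u v" for t u v
  proof -
    have "(src u, tgt u) \<in> step_rel T" using that(1) unfolding step_rel_def by blast
    then show ?thesis
      using that(2,3) unfolding causally_follows_def by (meson rtrancl_into_rtrancl rtrancl_trans)
  qed
  ultimately have "sorted_wrt (causally_follows T) \<pi>"
    using assms(1) successively_iff_sorted_wrt_strong[of \<pi> "causally_follows T"] by blast
  then show ?thesis using assms(3,4) by (simp add: sorted_wrt_nth_less)
qed

lemma run_ord_cong:
  assumes "\<And>i j. i < j \<Longrightarrow> j < length \<pi> \<Longrightarrow> (\<pi> ! i, \<pi> ! j) \<in> Ind T' \<longleftrightarrow> (\<pi> ! i, \<pi> ! j) \<in> Ind T"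
  shows "run_ord T' \<pi> = run_ord T \<pi>"
  unfolding run_ord_def using assms by (metis (no_types, lifting))

lemma lposet_iso_self:
  assumes "run_ord T' \<pi> = run_ord T \<pi>"
  shows "lposet_iso T \<pi> T' \<pi>"
  using assms unfolding lposet_iso_def by (intro conjI exI[of _ id]) auto

lemma hpb_if_same_causal_independence:
  assumes tr: "Tr T' = Tr T" and init: "init T' = init T"
    and ind: "\<And>t u. t \<in> Tr T \<Longrightarrow> u \<in> Tr T \<Longrightarrow> causally_follows T t u \<Longrightarrow>
                (t, u) \<in> Ind T' \<longleftrightarrow> (t, u) \<in> Ind T"
  shows "hpb T T'"
proof -
  let ?run = "\<lambda>\<pi>. set \<pi> \<subseteq> Tr T \<and> successively (\<lambda>t u. tgt t = src u) \<pi>"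
  have end_state: "end_state T' \<pi> = end_state T \<pi>" for \<pi>
    using init by (simp add: end_state_def)
  have extend: "synchronous T T' \<pi> u \<pi> u \<and> ?run (\<pi> @ [u])"
    if "?run \<pi>" "u \<in> Tr T" "src u = end_state T \<pi>" for \<pi> u
  proof -
    have run: "?run (\<pi> @ [u])"
      using that by (auto simp: successively_append_iff end_state_def split: if_splits)
    have in_Tr: "(\<pi> @ [u]) ! k \<in> Tr T" if "k < length (\<pi> @ [u])" for k
      using run that by (meson nth_mem subsetD)
    have "run_ord T' (\<pi> @ [u]) = run_ord T (\<pi> @ [u])"
      using run by (intro run_ord_cong ind causally_follows_nth) (auto intro: in_Tr)
    moreover have "last_indep T' \<pi> u \<longleftrightarrow> last_indep T \<pi> u"
    proof (cases "\<pi> = []")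
      case False
      then have "last \<pi> \<in> Tr T" using that(1) by auto
      then show ?thesis
        using False that(2,3) ind[of "last \<pi>" u]
        by (simp add: last_indep_def causally_follows_def end_state_def)
    qed (simp add: last_indep_def)
    ultimately show ?thesis
      using run by (simp add: synchronous_def lposet_iso_self)
  qed
  have "\<pi>' = \<pi> \<Longrightarrow> ?run \<pi> \<Longrightarrow> eve_wins T T' \<pi> \<pi>'" for \<pi> \<pi>'
  proof (coinduction arbitrary: \<pi> \<pi>' rule: eve_wins.coinduct)
    case (eve_wins \<pi> \<pi>')
    then show ?case using extend unfolding tr end_state by blast
  qed
  then show ?thesis by (simp add: hpb_def)
qed

lemma eve_wins_answer:
  assumes "eve_wins T T' \<pi> \<pi>'" "u \<in> Tr T" "src u = end_state T \<pi>"
  obtains v where "v \<in> Tr T'" "src v = end_state T' \<pi>'" "lab v = lab u"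
    "synchronous T T' \<pi> u \<pi>' v" "eve_wins T T' (\<pi> @ [u]) (\<pi>' @ [v])"
  using assms by (cases rule: eve_wins.cases) blast

section \<open>Systems generated by commuting squares\<close>

text \<open>\<open>(s, a, s1, b, s2, q)\<close> is the square \<open>s -a\<rightarrow> s1 -b\<rightarrow> q\<close>, \<open>s -b\<rightarrow> s2 -a\<rightarrow> q\<close>;
  its differently labelled edges are pairwise independent.\<close>

type_synonym ('s, 'l) square = "'s \<times> 'l \<times> 's \<times> 'l \<times> 's \<times> 's"

fun square_edges :: "('s, 'l) square \<Rightarrow> ('s, 'l) trans set" where
  "square_edges (s, a, s1, b, s2, q) = {(s, a, s1), (s, b, s2), (s1, b, q), (s2, a, q)}"

fun proper_square :: "('s, 'l) square \<Rightarrow> bool" where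
  "proper_square (s, a, s1, b, s2, q) \<longleftrightarrow> a \<noteq> b \<and> distinct [s, s1, s2, q]"

definition square_ind :: "('s, 'l) square set \<Rightarrow> (('s, 'l) trans \<times> ('s, 'l) trans) set" where
  "square_ind Q = {(t, u). \<exists>\<sigma>\<in>Q. t \<in> square_edges \<sigma> \<and> u \<in> square_edges \<sigma> \<and> lab t \<noteq> lab u}"

lemma proper_square_same_source:
  assumes "proper_square (s, a, s1, b, s2, q)"
    and "t \<in> square_edges (s, a, s1, b, s2, q)" "u \<in> square_edges (s, a, s1, b, s2, q)"
    and "src t = src u" "lab t \<noteq> lab u"
  shows "(t, u) = ((s, a, s1), (s, b, s2)) \<or> (t, u) = ((s, b, s2), (s, a, s1))"
  using assms by (auto simp: src_def lab_def)

lemma proper_square_consecutive: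
  assumes "proper_square (s, a, s1, b, s2, q)"
    and "t \<in> square_edges (s, a, s1, b, s2, q)" "u \<in> square_edges (s, a, s1, b, s2, q)"
    and "tgt t = src u" "lab t \<noteq> lab u"
  shows "(t, u) = ((s, a, s1), (s1, b, q)) \<or> (t, u) = ((s, b, s2), (s2, a, q))"
  using assms by (auto simp: src_def tgt_def lab_def)

lemma proper_square_same_action:
  assumes "proper_square (s, a, s1, b, s2, q)"
    and "t \<in> square_edges (s, a, s1, b, s2, q)" "u \<in> square_edges (s, a, s1, b, s2, q)"
    and "src t = src u" "lab t = lab u"
  shows "t = u"
  using assms by (auto simp: src_def lab_def)

lemma square_ind_same_source_iff:
  assumes "\<And>\<sigma>. \<sigma> \<in> Q \<Longrightarrow> proper_square \<sigma>" and "src t = src u"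
  shows "(t, u) \<in> square_ind Q \<longleftrightarrow>
    (\<exists>(s, a, s1, b, s2, q)\<in>Q. (t, u) = ((s, a, s1), (s, b, s2)) \<or> (t, u) = ((s, b, s2), (s, a, s1)))"
proof
  assume "(t, u) \<in> square_ind Q"
  then obtain s a s1 b s2 q where "(s, a, s1, b, s2, q) \<in> Q"
    "t \<in> square_edges (s, a, s1, b, s2, q)" "u \<in> square_edges (s, a, s1, b, s2, q)" "lab t \<noteq> lab u"
    unfolding square_ind_def by auto
  with assms show "\<exists>(s, a, s1, b, s2, q)\<in>Q. (t, u) = ((s, a, s1), (s, b, s2)) \<or> (t, u) = ((s, b, s2), (s, a, s1))"
    using proper_square_same_source by fast
next
  assume "\<exists>(s, a, s1, b, s2, q)\<in>Q. (t, u) = ((s, a, s1), (s, b, s2)) \<or> (t, u) = ((s, b, s2), (s, a, s1))"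
  then obtain s a s1 b s2 q where \<sigma>: "(s, a, s1, b, s2, q) \<in> Q"
    and "(t, u) = ((s, a, s1), (s, b, s2)) \<or> (t, u) = ((s, b, s2), (s, a, s1))"
    by blast
  moreover have "a \<noteq> b" using assms(1)[OF \<sigma>] by simp
  ultimately show "(t, u) \<in> square_ind Q"
    unfolding square_ind_def by (auto simp: lab_def intro!: bexI[OF _ \<sigma>])
qed

lemma square_ind_consecutive_iff:
  assumes "\<And>\<sigma>. \<sigma> \<in> Q \<Longrightarrow> proper_square \<sigma>" and "tgt t = src u"
  shows "(t, u) \<in> square_ind Q \<longleftrightarrow>
    (\<exists>(s, a, s1, b, s2, q)\<in>Q. (t, u) = ((s, a, s1), (s1, b, q)) \<or> (t, u) = ((s, b, s2), (s2, a, q)))"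
proof
  assume "(t, u) \<in> square_ind Q"
  then obtain s a s1 b s2 q where "(s, a, s1, b, s2, q) \<in> Q"
    "t \<in> square_edges (s, a, s1, b, s2, q)" "u \<in> square_edges (s, a, s1, b, s2, q)" "lab t \<noteq> lab u"
    unfolding square_ind_def by auto
  with assms show "\<exists>(s, a, s1, b, s2, q)\<in>Q. (t, u) = ((s, a, s1), (s1, b, q)) \<or> (t, u) = ((s, b, s2), (s2, a, q))"
    using proper_square_consecutive by fast
next
  assume "\<exists>(s, a, s1, b, s2, q)\<in>Q. (t, u) = ((s, a, s1), (s1, b, q)) \<or> (t, u) = ((s, b, s2), (s2, a, q))"
  then obtain s a s1 b s2 q where \<sigma>: "(s, a, s1, b, s2, q) \<in> Q"
    and "(t, u) = ((s, a, s1), (s1, b, q)) \<or> (t, u) = ((s, b, s2), (s2, a, q))"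
    by blast
  moreover have "a \<noteq> b" using assms(1)[OF \<sigma>] by simp
  ultimately show "(t, u) \<in> square_ind Q"
    unfolding square_ind_def by (auto simp: lab_def intro!: bexI[OF _ \<sigma>])
qed

locale square_complex =
  fixes T :: "('s, 'l, 'x) tsi_scheme" and Q :: "('s, 'l) square set"
  assumes init_in_St: "init T \<in> St T"
    and Tr_typed: "Tr T \<subseteq> St T \<times> Lab T \<times> St T"
    and image_finite: "finite (Xs T s)"
    and Ind_eq: "Ind T = square_ind Q"
    and square_edges_in_Tr: "\<sigma> \<in> Q \<Longrightarrow> square_edges \<sigma> \<subseteq> Tr T"
    and proper: "\<sigma> \<in> Q \<Longrightarrow> proper_square \<sigma>"
    and edge_disjoint: "disjoint_family_on square_edges Q"
begin

lemma same_square: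
  "\<sigma> \<in> Q \<Longrightarrow> \<sigma>' \<in> Q \<Longrightarrow> t \<in> square_edges \<sigma> \<Longrightarrow> t \<in> square_edges \<sigma>' \<Longrightarrow> \<sigma>' = \<sigma>"
  using edge_disjoint by (auto simp: disjoint_family_on_def)

lemma Ind_iff: "(t, u) \<in> Ind T \<longleftrightarrow> (\<exists>\<sigma>\<in>Q. t \<in> square_edges \<sigma> \<and> u \<in> square_edges \<sigma> \<and> lab t \<noteq> lab u)"
  by (simp add: Ind_eq square_ind_def)

lemma Ind_iff_in_square:
  assumes "\<sigma> \<in> Q" "t \<in> square_edges \<sigma>"
  shows "(t, u) \<in> Ind T \<longleftrightarrow> u \<in> square_edges \<sigma> \<and> lab t \<noteq> lab u"
  using assms same_square unfolding Ind_iff by blast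

lemma prec_same_square:
  assumes "prec T t u"
  shows "\<exists>\<sigma>\<in>Q. t \<in> square_edges \<sigma> \<and> u \<in> square_edges \<sigma> \<and> lab t = lab u"
proof -
  obtain s a s1 s2 q b where tu: "t = (s, a, s1)" "u = (s2, a, q)"
    and "(t, (s, b, s2)) \<in> Ind T" "((s, b, s2), u) \<in> Ind T"
    using assms unfolding prec_def by blast
  then obtain \<sigma> \<sigma>' where "\<sigma> \<in> Q" "t \<in> square_edges \<sigma>" "(s, b, s2) \<in> square_edges \<sigma>"
    and "\<sigma>' \<in> Q" "(s, b, s2) \<in> square_edges \<sigma>'" "u \<in> square_edges \<sigma>'"
    unfolding Ind_iff by blast
  then show ?thesis
    using same_square tu by (metis lab_def fst_conv snd_conv)
qed

lemma simT_same_square: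
  assumes "(t, u) \<in> simT T"
  shows "t = u \<or> (\<exists>\<sigma>\<in>Q. t \<in> square_edges \<sigma> \<and> u \<in> square_edges \<sigma> \<and> lab t = lab u)"
  using assms unfolding simT_def
proof (induction rule: rtrancl_induct)
  case (step u v)
  then have "\<exists>\<sigma>\<in>Q. u \<in> square_edges \<sigma> \<and> v \<in> square_edges \<sigma> \<and> lab u = lab v"
    using prec_same_square[of u v] prec_same_square[of v u] by fastforce
  with step.IH show ?case
    using same_square by metis
qed simp

lemma simT_same_source_eq:
  assumes "((s, a, s1), (s, a, s2)) \<in> simT T"
  shows "s1 = s2"
  using simT_same_square[OF assms] proper proper_square_same_action
  by (metis prod_cases6 src_def fst_conv prod.inject)

lemma Ind_same_source_completes:
  assumes "((s, a, s1), (s, b, s2)) \<in> Ind T"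
  shows "\<exists>q. ((s, a, s1), (s1, b, q)) \<in> Ind T \<and> ((s, b, s2), (s2, a, q)) \<in> Ind T"
proof -
  obtain p a' p1 b' p2 q where \<sigma>: "(p, a', p1, b', p2, q) \<in> Q"
    and "(s, a, s1) \<in> square_edges (p, a', p1, b', p2, q)" "(s, b, s2) \<in> square_edges (p, a', p1, b', p2, q)"
    and "lab (s, a, s1) \<noteq> lab (s, b, s2)"
    using assms unfolding Ind_iff by (metis prod_cases6)
  then have "((s, a, s1), (s, b, s2)) = ((p, a', p1), (p, b', p2)) \<or>
      ((s, a, s1), (s, b, s2)) = ((p, b', p2), (p, a', p1))"
    by (intro proper_square_same_source[OF proper[OF \<sigma>]]) (simp_all add: src_def)
  with \<sigma> show ?thesis
    using proper[OF \<sigma>] unfolding Ind_iff by (auto simp: lab_def intro!: exI[of _ q] bexI[OF _ \<sigma>])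
qed

lemma Ind_consecutive_completes:
  assumes "((s, a, s1), (s1, b, q)) \<in> Ind T"
  shows "\<exists>s2. ((s, a, s1), (s, b, s2)) \<in> Ind T \<and> ((s, b, s2), (s2, a, q)) \<in> Ind T"
proof -
  obtain p a' p1 b' p2 q' where \<sigma>: "(p, a', p1, b', p2, q') \<in> Q"
    and "(s, a, s1) \<in> square_edges (p, a', p1, b', p2, q')" "(s1, b, q) \<in> square_edges (p, a', p1, b', p2, q')"
    and "lab (s, a, s1) \<noteq> lab (s1, b, q)"
    using assms unfolding Ind_iff by (metis prod_cases6)
  then have "((s, a, s1), (s1, b, q)) = ((p, a', p1), (p1, b', q')) \<or>
      ((s, a, s1), (s1, b, q)) = ((p, b', p2), (p2, a', q'))"
    by (intro proper_square_consecutive[OF proper[OF \<sigma>]]) (simp_all add: src_def tgt_def)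
  then show ?thesis
  proof (elim disjE)
    assume "((s, a, s1), (s1, b, q)) = ((p, a', p1), (p1, b', q'))"
    then have "((s, a, s1), (s, b, p2)) \<in> Ind T \<and> ((s, b, p2), (p2, a, q)) \<in> Ind T"
      using proper[OF \<sigma>] unfolding Ind_iff by (auto simp: lab_def intro!: bexI[OF _ \<sigma>])
    then show ?thesis ..
  next
    assume "((s, a, s1), (s1, b, q)) = ((p, b', p2), (p2, a', q'))"
    then have "((s, a, s1), (s, b, p1)) \<in> Ind T \<and> ((s, b, p1), (p1, a, q)) \<in> Ind T"
      using proper[OF \<sigma>] unfolding Ind_iff by (auto simp: lab_def intro!: bexI[OF _ \<sigma>])
    then show ?thesis ..
  qed
qed

lemma simT_same_independents:
  assumes "(t, t') \<in> simT T"
  shows "{u. (t, u) \<in> Ind T} = {u. (t', u) \<in> Ind T}"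
proof -
  obtain \<sigma> where "t = t' \<or> \<sigma> \<in> Q \<and> t \<in> square_edges \<sigma> \<and> t' \<in> square_edges \<sigma> \<and> lab t = lab t'"
    using simT_same_square[OF assms] by blast
  then show ?thesis
    using Ind_iff_in_square[of \<sigma> t] Ind_iff_in_square[of \<sigma> t'] by auto
qed

theorem is_tsi: "is_tsi T"
  unfolding is_tsi_def
proof (intro conjI allI impI)
  show "init T \<in> St T" "Tr T \<subseteq> St T \<times> Lab T \<times> St T" "finite {t \<in> Tr T. src t = s}" for s
    using init_in_St Tr_typed image_finite by (simp_all add: Xs_def)
  show "Ind T \<subseteq> Tr T \<times> Tr T" "irrefl (Ind T)" "sym (Ind T)"
    using square_edges_in_Tr by (auto simp: Ind_iff irrefl_def sym_def)
qed (simp_all add: simT_same_source_eq Ind_same_source_completes Ind_consecutive_completes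
    simT_same_independents)

end

lemma is_tsi_square_system:
  assumes "s0 \<in> S" "R \<subseteq> S \<times> L \<times> S" "finite R"
    and "\<And>\<sigma>. \<sigma> \<in> Q \<Longrightarrow> proper_square \<sigma> \<and> square_edges \<sigma> \<subseteq> R"
    and "disjoint_family_on square_edges Q"
  shows "is_tsi \<lparr>St = S, init = s0, Lab = L, Tr = R, Ind = square_ind Q\<rparr>"
  by (rule square_complex.is_tsi, unfold_locales) (use assms in \<open>auto simp: Xs_def\<close>)

section \<open>The counterexamples\<close>

definition Tr12 :: "(nat, nat) trans set" where
  "Tr12 = {(0,0,1), (0,0,2), (0,1,3), (0,1,4), (1,1,5), (2,1,5), (3,0,5), (4,0,5), (1,3,5), (3,2,5)}"

definition squares1 :: "(nat, nat) square set" where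
  "squares1 = {(0,0,1,1,3,5), (0,0,2,1,4,5)}"

definition squares2 :: "(nat, nat) square set" where
  "squares2 = {(0,0,1,1,4,5), (0,0,2,1,3,5)}"

definition T1 :: "(nat, nat) tsi" where
  "T1 = \<lparr>St = {0..5}, init = 0, Lab = {0..3}, Tr = Tr12, Ind = square_ind squares1\<rparr>"

definition T2 :: "(nat, nat) tsi" where
  "T2 = \<lparr>St = {0..5}, init = 0, Lab = {0..3}, Tr = Tr12, Ind = square_ind squares2\<rparr>"

definition Tr34 :: "(nat, nat) trans set" where
  "Tr34 = {(0,0,1), (0,1,2), (1,1,3), (1,1,4), (2,0,3), (2,0,4), (3,2,5)}"

definition T3 :: "(nat, nat) tsi" where
  "T3 = \<lparr>St = {0..5}, init = 0, Lab = {0..2}, Tr = Tr34, Ind = square_ind {(0,0,1,1,2,3)}\<rparr>"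

definition T4 :: "(nat, nat) tsi" where
  "T4 = \<lparr>St = {0..5}, init = 0, Lab = {0..2}, Tr = Tr34, Ind = square_ind {(0,0,1,1,2,4)}\<rparr>"

lemma is_tsi_T1: "is_tsi T1"
  unfolding T1_def
proof (rule is_tsi_square_system)
  show "\<sigma> \<in> squares1 \<Longrightarrow> proper_square \<sigma> \<and> square_edges \<sigma> \<subseteq> Tr12" for \<sigma>
    unfolding squares1_def by (elim insertE emptyE; simp add: Tr12_def)
  show "disjoint_family_on square_edges squares1"
    by (simp add: squares1_def disjoint_family_on_insert) (simp add: disjoint_family_on_def)
qed (simp_all add: Tr12_def)

lemma is_tsi_T2: "is_tsi T2"
  unfolding T2_def
proof (rule is_tsi_square_system)
  show "\<sigma> \<in> squares2 \<Longrightarrow> proper_square \<sigma> \<and> square_edges \<sigma> \<subseteq> Tr12" for \<sigma>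
    unfolding squares2_def by (elim insertE emptyE; simp add: Tr12_def)
  show "disjoint_family_on square_edges squares2"
    by (simp add: squares2_def disjoint_family_on_insert) (simp add: disjoint_family_on_def)
qed (simp_all add: Tr12_def)

lemma is_tsi_T3: "is_tsi T3"
  unfolding T3_def by (rule is_tsi_square_system) (simp_all add: Tr34_def disjoint_family_on_def)

lemma is_tsi_T4: "is_tsi T4"
  unfolding T4_def by (rule is_tsi_square_system) (simp_all add: Tr34_def disjoint_family_on_def)

text \<open>Runs of \<open>T1\<close> have length at most two.\<close>

lemma causally_follows_T1_consecutive:
  assumes "t \<in> Tr T1" "u \<in> Tr T1" "causally_follows T1 t u"
  shows "tgt t = src u"
proof -
  have into_final: "y = 5" if "(x, y) \<in> step_rel T1" "x \<noteq> 0" for x y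
    using that by (auto simp: step_rel_def T1_def Tr12_def src_def tgt_def)
  have from_final: "(5, y) \<notin> step_rel T1" for y
    by (auto simp: step_rel_def T1_def Tr12_def src_def tgt_def)
  have "tgt t \<noteq> 0" "src u \<noteq> 5"
    using assms(1,2) by (auto simp: T1_def Tr12_def src_def tgt_def)
  from assms(3) have "(tgt t, src u) \<in> (step_rel T1)\<^sup>*"
    by (simp add: causally_follows_def)
  then show ?thesis
  proof (cases rule: converse_rtranclE)
    case (step z)
    with into_final \<open>tgt t \<noteq> 0\<close> have "(5, src u) \<in> (step_rel T1)\<^sup>*" by blast
    then show ?thesis
      using from_final \<open>src u \<noteq> 5\<close> by (cases rule: converse_rtranclE) auto
  qed
qed

lemma hpb_T1_T2: "hpb T1 T2"
proof (rule hpb_if_same_causal_independence)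
  fix t u
  assume "t \<in> Tr T1" "u \<in> Tr T1" "causally_follows T1 t u"
  then have "tgt t = src u" by (rule causally_follows_T1_consecutive)
  then have "(t, u) \<in> square_ind squares2 \<longleftrightarrow> (t, u) \<in> square_ind squares1"
    by (subst (1 2) square_ind_consecutive_iff) (auto simp: squares1_def squares2_def)
  then show "(t, u) \<in> Ind T2 \<longleftrightarrow> (t, u) \<in> Ind T1"
    by (simp add: T1_def T2_def)
qed (simp_all add: T1_def T2_def)

lemma tmu_equiv_T3_T4: "tmu_equiv T3 T4"
proof (rule tmu_equiv_if_same_conflicts)
  fix t u :: "(nat, nat) trans"
  assume "src t = src u"
  then have "(t, u) \<in> square_ind {(0,0,1,1,2,4)} \<longleftrightarrow> (t, u) \<in> square_ind {(0,0,1,1,2,3)}"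
    by (subst (1 2) square_ind_same_source_iff) auto
  then show "(t, u) \<in> Ind T4 \<longleftrightarrow> (t, u) \<in> Ind T3"
    by (simp add: T3_def T4_def)
qed (simp_all add: T3_def T4_def)

lemma T1_T2_simps:
  "Tr T1 = Tr12" "init T1 = 0" "St T1 = {0..5}"
  "Tr T2 = Tr12" "init T2 = 0" "St T2 = {0..5}"
  by (simp_all add: T1_def T2_def)

lemma Xs_Tr12:
  assumes "Tr T = Tr12"
  shows "Xs T 0 = {(0,0,1), (0,0,2), (0,1,3), (0,1,4)}" "Xs T 1 = {(1,1,5), (1,3,5)}"
    "Xs T 2 = {(2,1,5)}" "Xs T 3 = {(3,0,5), (3,2,5)}" "Xs T 4 = {(4,0,5)}" "Xs T 5 = {}"
  unfolding Xs_def src_def assms Tr12_def by auto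

lemma otimes_T1:
  "otimes T1 t u \<longleftrightarrow> (t, u) \<in> {((0,0,1), (0,1,3)), ((0,1,3), (0,0,1)), ((0,0,2), (0,1,4)), ((0,1,4), (0,0,2))}"
proof -
  have "(t, u) \<in> square_ind squares1 \<longleftrightarrow> (t, u) \<in> {((0,0,1), (0,1,3)), ((0,1,3), (0,0,1)), ((0,0,2), (0,1,4)), ((0,1,4), (0,0,2))}"
    if "src t = src u"
    using that by (subst square_ind_same_source_iff) (auto simp: squares1_def)
  then show ?thesis
    unfolding otimes_def by (auto simp: T1_def src_def)
qed

lemma otimes_T2:
  "otimes T2 t u \<longleftrightarrow> (t, u) \<in> {((0,0,1), (0,1,4)), ((0,1,4), (0,0,1)), ((0,0,2), (0,1,3)), ((0,1,3), (0,0,2))}"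
proof -
  have "(t, u) \<in> square_ind squares2 \<longleftrightarrow> (t, u) \<in> {((0,0,1), (0,1,4)), ((0,1,4), (0,0,1)), ((0,0,2), (0,1,3)), ((0,1,3), (0,0,2))}"
    if "src t = src u"
    using that by (subst square_ind_same_source_iff) (auto simp: squares2_def)
  then show ?thesis
    unfolding otimes_def by (auto simp: T2_def src_def)
qed

definition phi12 :: "nat form" where
  "phi12 = DiaOt (Conj (Dia 0 (Dia 3 TT)) (Conj (Dia 1 (Dia 2 TT)) (Neg (Dia 0 (Neg (Dia 3 TT))))))"

lemma sat_T1_phi12: "sat T1 (Xs T1 (init T1)) None phi12"
proof -
  let ?M = "{(0,0,1), (0,1,3)} :: (nat, nat) trans set"
  have sq: "sqsub T1 ?M (Xs T1 0)"
    unfolding sqsub_def Xs_Tr12[OF T1_T2_simps(1)] otimes_T1 by auto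
  moreover have "conflict_free T1 ?M"
    unfolding conflict_free_def otimes_T1 by (auto simp: T1_T2_simps Tr12_def src_def)
  ultimately have "?M \<in> Xcal T1"
    unfolding Xcal_def support_def by (auto simp: T1_T2_simps)
  moreover have "sat T1 ?M None (Conj (Dia 0 (Dia 3 TT)) (Conj (Dia 1 (Dia 2 TT)) (Neg (Dia 0 (Neg (Dia 3 TT))))))"
    \<comment> \<open>\<open>One_nat_def\<close> would turn state \<open>1\<close> into \<open>Suc 0\<close> and block \<open>Xs_Tr12\<close>\<close>
    by (simp add: leA_or_ominusA_iff Xs_Tr12[OF T1_T2_simps(1)] T1_T2_simps src_def tgt_def lab_def del: One_nat_def)
  ultimately show ?thesis
    using sq unfolding phi12_def T1_T2_simps sat.simps(5) by blast
qed

lemma not_sat_T2_phi12: "\<not> sat T2 (Xs T2 (init T2)) None phi12"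
proof
  assume "sat T2 (Xs T2 (init T2)) None phi12"
  then obtain M where M: "M \<in> Xcal T2" "sqsub T2 M (Xs T2 0)"
    and sat_M: "sat T2 M None (Conj (Dia 0 (Dia 3 TT)) (Conj (Dia 1 (Dia 2 TT)) (Neg (Dia 0 (Neg (Dia 3 TT))))))"
    unfolding phi12_def T1_T2_simps sat.simps(5) by blast
  have sub: "M \<subseteq> {(0,0,1), (0,0,2), (0,1,3), (0,1,4)}"
    using M(2) unfolding sqsub_def Xs_Tr12[OF T1_T2_simps(4)] by blast
  from sat_M obtain r r' where "r \<in> M" "lab r = 0" "r' \<in> Xs T2 (tgt r)" "lab r' = 3"
    by auto
  with sub have a1: "(0,0,1) \<in> M"
    by (auto simp: Xs_Tr12[OF T1_T2_simps(4)] lab_def tgt_def)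
  from sat_M obtain p p' where "p \<in> M" "lab p = 1" "p' \<in> Xs T2 (tgt p)" "lab p' = 2"
    by auto
  with sub have b1: "(0,1,3) \<in> M"
    by (auto simp: Xs_Tr12[OF T1_T2_simps(4)] lab_def tgt_def)
  have enables_3: "\<exists>r'\<in>Xs T2 (tgt r). lab r' = 3" if "r \<in> M" "lab r = 0" "src r = 0" for r
    using sat_M that by (auto simp: leA_or_ominusA_iff T1_T2_simps)
  have "(0,0,2) \<notin> M"
  proof
    assume "(0,0,2) \<in> M"
    with enables_3[of "(0,0,2)"] show False
      by (simp add: Xs_Tr12[OF T1_T2_simps(4)] src_def tgt_def lab_def)
  qed
  have "M \<noteq> Xs T2 s" for s
  proof
    assume "M = Xs T2 s"
    with a1 have "s = 0" by (simp add: Xs_def src_def)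
    with \<open>M = Xs T2 s\<close> \<open>(0,0,2) \<notin> M\<close> show False
      by (simp add: Xs_Tr12[OF T1_T2_simps(4)])
  qed
  moreover have "\<not> conflict_free T2 M"
  proof
    assume "conflict_free T2 M"
    with a1 have "\<forall>t'\<in>M. (0,0,1) \<noteq> t' \<longrightarrow> otimes T2 (0,0,1) t'"
      unfolding conflict_free_def by blast
    from this[rule_format, OF b1] show False
      by (simp add: otimes_T2)
  qed
  ultimately show False
    using M(1) unfolding Xcal_def support_def by blast
qed

lemma not_tmu_equiv_T1_T2: "\<not> tmu_equiv T1 T2"
  using sat_T1_phi12 not_sat_T2_phi12 by (auto simp: tmu_equiv_def)

lemma T3_T4_simps: "Tr T3 = Tr34" "init T3 = 0" "Tr T4 = Tr34" "init T4 = 0"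
  by (simp_all add: T3_def T4_def)

lemma not_hpb_T3_T4: "\<not> hpb T3 T4"
proof
  assume "hpb T3 T4"
  then have "eve_wins T3 T4 [] []" by (simp add: hpb_def)
  moreover have "(0,0,1) \<in> Tr T3" "src (0,0,1) = end_state T3 []"
    by (simp_all add: T3_T4_simps Tr34_def src_def end_state_def)
  ultimately obtain v where "v \<in> Tr T4" "src v = end_state T4 []" "lab v = lab ((0,0,1) :: (nat, nat) trans)"
    and "synchronous T3 T4 [] (0,0,1) [] v" and win_v: "eve_wins T3 T4 [(0,0,1)] [v]"
    by (rule eve_wins_answer) simp
  then have "v = (0,0,1)"
    by (auto simp: T3_T4_simps Tr34_def src_def lab_def end_state_def)
  with win_v have "eve_wins T3 T4 [(0,0,1)] [(0,0,1)]" by simp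
  moreover have "(1,1,3) \<in> Tr T3" "src (1,1,3) = end_state T3 [(0,0,1)]"
    by (simp_all add: T3_T4_simps Tr34_def src_def tgt_def end_state_def)
  ultimately obtain w where "w \<in> Tr T4" "src w = end_state T4 [(0,0,1)]" "lab w = lab ((1,1,3) :: (nat, nat) trans)"
    and sync_w: "synchronous T3 T4 [(0,0,1)] (1,1,3) [(0,0,1)] w"
    and win_w: "eve_wins T3 T4 [(0,0,1), (1,1,3)] [(0,0,1), w]"
    by (rule eve_wins_answer) simp
  then have "w \<in> {(1,1,3), (1,1,4)}"
    by (auto simp: T3_T4_simps Tr34_def src_def tgt_def lab_def end_state_def)
  moreover have "((0,0,1), (1,1,3)) \<in> Ind T3" "((0,0,1), (1,1,3)) \<notin> Ind T4"
    by (simp_all add: T3_def T4_def square_ind_def lab_def)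
  with sync_w have "w \<noteq> (1,1,3)"
    by (auto simp: synchronous_def last_indep_def)
  ultimately have "w = (1,1,4)" by blast
  with win_w have "eve_wins T3 T4 [(0,0,1), (1,1,3)] [(0,0,1), (1,1,4)]" by simp
  moreover have "(3,2,5) \<in> Tr T3" "src (3,2,5) = end_state T3 [(0,0,1), (1,1,3)]"
    by (simp_all add: T3_T4_simps Tr34_def src_def tgt_def end_state_def)
  ultimately obtain x where "x \<in> Tr T4" "src x = end_state T4 [(0,0,1), (1,1,4)]"
    by (rule eve_wins_answer)
  then show False
    by (auto simp: T3_T4_simps Tr34_def src_def tgt_def end_state_def)
qed

theorem proposition3:
  shows "(\<exists>(T1 :: (nat, nat) tsi) (T2 :: (nat, nat) tsi). is_tsi T1 \<and> is_tsi T2 \<and> hpb T1 T2 \<and> \<not> tmu_equiv T1 T2) \<and>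
         (\<exists>(T3 :: (nat, nat) tsi) (T4 :: (nat, nat) tsi). is_tsi T3 \<and> is_tsi T4 \<and> tmu_equiv T3 T4 \<and> \<not> hpb T3 T4)"
  using is_tsi_T1 is_tsi_T2 hpb_T1_T2 not_tmu_equiv_T1_T2
    is_tsi_T3 is_tsi_T4 tmu_equiv_T3_T4 not_hpb_T3_T4 by blast

end
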